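(* Let $G:=\mathrm{Cay}(\Gamma,S)$ be a Cayley graph, $r\ge2$ an integer, and $X$ an $r$-local $2$-separator of $G$. Then no cycle in $G$ of length at most $r$ strongly traverses $X$. In particular, if a word $w$ in $S$ strongly traverses $X$, then $w$ is not a cyclic subword of any morpheme of $\Gamma$ in $S$ of length at most $r$.
   Context: A generating set excludes the identity $\mathbb{I}$ and is closed under inverses; $\mathrm{Cay}(\Gamma,S)$ is the simple graph on $\Gamma$ with edges $\{g,gs\}$. Ball $B_r(v)$: the subgraph of all vertices and edges on closed walks of length $\le r$ through $v$. For a 2-set $X=\{v_0,v_1\}$, $N(X)$ is the set of vertices outside $X$ adjacent to $X$; the connectivity graph $C_r(v_0,v_1)$ has vertex set $N(X)$, with $a,b$ adjacent if for some $i$ they lie in the same component of $B_r(v_i)-v_0-v_1$. $X$ is an $r$-local $2$-separator if $C_r(v_0,v_1)$ is disconnected and $d_G(v_0,v_1)\le r/2$; its $r$-local components are the components of $C_r(v_0,v_1)$. A traversal of $X$ is a walk whose two ends lie in distinct $r$-local components at $X$ and all of whose internal vertices lie in $X$; it is strong if it has exactly two internal vertices. A cycle (as a closed walk) strongly traverses $X$ if some cyclic subwalk of it (a subwalk of a cyclic rotation of it or of its reverse) is a strong traversal of $X$. A word $w=a_1\cdots a_k$ in $S$ strongly traverses $X$ if for some vertex $v$ the walk $v,va_1,va_1a_2,\ldots,va_1\cdots a_k$ has a subwalk that is a strong traversal of $X$. A morpheme of $\Gamma$ in $S$ is a nonempty word in $S$ evaluating to $\mathbb{I}$ none of whose nonempty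 proper contiguous subwords evaluates to $\mathbb{I}$. A word $u$ is a cyclic subword of $w$ if $u$ or $u^{-1}$ is a contiguous subword of a cyclic permutation of $w$. *)

theory Defs
  imports "HOL-Algebra.Generated_Groups"
begin

definition cay_adj :: "('a,'b) monoid_scheme \<Rightarrow> 'a set \<Rightarrow> 'a \<Rightarrow> 'a \<Rightarrow> bool" where
  "cay_adj G S g h \<longleftrightarrow> g \<in> carrier G \<and> h \<in> carrier G \<and> (\<exists>s\<in>S. h = g \<otimes>\<^bsub>G\<^esub> s)"

text \<open>A walk is a nonempty vertex list with consecutive vertices adjacent; its length is
  the number of edges, i.e. length - 1.\<close>
definition is_walk :: "('a,'b) monoid_scheme \<Rightarrow> 'a set \<Rightarrow> 'a list \<Rightarrow> bool" where
  "is_walk G S ws \<longleftrightarrow> ws \<noteq> [] \<and> set ws \<subseteq> carrier G \<and>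
     (\<forall>i. Suc i < length ws \<longrightarrow> cay_adj G S (ws ! i) (ws ! Suc i))"

definition closed_walk_through :: "('a,'b) monoid_scheme \<Rightarrow> 'a set \<Rightarrow> nat \<Rightarrow> 'a \<Rightarrow> 'a list \<Rightarrow> bool" where
  "closed_walk_through G S r v ws \<longleftrightarrow> is_walk G S ws \<and> hd ws = last ws \<and>
     length ws - 1 \<le> r \<and> v \<in> set ws"

definition ball_verts :: "('a,'b) monoid_scheme \<Rightarrow> 'a set \<Rightarrow> nat \<Rightarrow> 'a \<Rightarrow> 'a set" where
  "ball_verts G S r v = {x. \<exists>ws. closed_walk_through G S r v ws \<and> x \<in> set ws}"

definition ball_edge :: "('a,'b) monoid_scheme \<Rightarrow> 'a set \<Rightarrow> nat \<Rightarrow> 'a \<Rightarrow> 'a \<Rightarrow> 'a \<Rightarrow> bool" where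
  "ball_edge G S r v a b \<longleftrightarrow> (\<exists>ws i. closed_walk_through G S r v ws \<and> Suc i < length ws \<and>
     {ws ! i, ws ! Suc i} = {a, b})"

definition ball_conn :: "('a,'b) monoid_scheme \<Rightarrow> 'a set \<Rightarrow> nat \<Rightarrow> 'a \<Rightarrow> 'a set \<Rightarrow> 'a \<Rightarrow> 'a \<Rightarrow> bool" where
  "ball_conn G S r v X a b \<longleftrightarrow> a \<in> ball_verts G S r v - X \<and> b \<in> ball_verts G S r v - X \<and>
     (a, b) \<in> {(x, y). ball_edge G S r v x y \<and> x \<notin> X \<and> y \<notin> X}\<^sup>*"

definition nbhd :: "('a,'b) monoid_scheme \<Rightarrow> 'a set \<Rightarrow> 'a set \<Rightarrow> 'a set" where
  "nbhd G S X = {y \<in> carrier G. y \<notin> X \<and> (\<exists>x\<in>X. cay_adj G S x y)}"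

definition conn_adj :: "('a,'b) monoid_scheme \<Rightarrow> 'a set \<Rightarrow> nat \<Rightarrow> 'a set \<Rightarrow> 'a \<Rightarrow> 'a \<Rightarrow> bool" where
  "conn_adj G S r X a b \<longleftrightarrow> a \<in> nbhd G S X \<and> b \<in> nbhd G S X \<and> (\<exists>v\<in>X. ball_conn G S r v X a b)"

definition same_local_comp :: "('a,'b) monoid_scheme \<Rightarrow> 'a set \<Rightarrow> nat \<Rightarrow> 'a set \<Rightarrow> 'a \<Rightarrow> 'a \<Rightarrow> bool" where
  "same_local_comp G S r X a b \<longleftrightarrow> a \<in> nbhd G S X \<and> b \<in> nbhd G S X \<and>
     (a, b) \<in> {(x, y). conn_adj G S r X x y}\<^sup>*"

definition local_2sep :: "('a,'b) monoid_scheme \<Rightarrow> 'a set \<Rightarrow> nat \<Rightarrow> 'a set \<Rightarrow> bool" where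
  "local_2sep G S r X \<longleftrightarrow> (\<exists>v0 v1. X = {v0, v1} \<and> v0 \<noteq> v1 \<and> v0 \<in> carrier G \<and> v1 \<in> carrier G \<and>
     (\<exists>a\<in>nbhd G S X. \<exists>b\<in>nbhd G S X. \<not> same_local_comp G S r X a b) \<and>
     (\<exists>ws. is_walk G S ws \<and> hd ws = v0 \<and> last ws = v1 \<and> 2 * (length ws - 1) \<le> r))"

definition strong_trav :: "('a,'b) monoid_scheme \<Rightarrow> 'a set \<Rightarrow> nat \<Rightarrow> 'a set \<Rightarrow> 'a list \<Rightarrow> bool" where
  "strong_trav G S r X ws \<longleftrightarrow> is_walk G S ws \<and> length ws = 4 \<and> ws ! 1 \<in> X \<and> ws ! 2 \<in> X \<and>
     ws ! 0 \<in> nbhd G S X \<and> ws ! 3 \<in> nbhd G S X \<and> \<not> same_local_comp G S r X (ws ! 0) (ws ! 3)"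

definition is_cycle :: "('a,'b) monoid_scheme \<Rightarrow> 'a set \<Rightarrow> 'a list \<Rightarrow> bool" where
  "is_cycle G S cs \<longleftrightarrow> length cs \<ge> 3 \<and> distinct cs \<and> set cs \<subseteq> carrier G \<and>
     (\<forall>i < length cs. cay_adj G S (cs ! i) (cs ! ((Suc i) mod length cs)))"

definition cyc_window :: "'a list \<Rightarrow> nat \<Rightarrow> nat \<Rightarrow> 'a list" where
  "cyc_window cs i k = map (\<lambda>j. cs ! ((i + j) mod length cs)) [0..<Suc k]"

definition cycle_strongly_traverses :: "('a,'b) monoid_scheme \<Rightarrow> 'a set \<Rightarrow> nat \<Rightarrow> 'a set \<Rightarrow> 'a list \<Rightarrow> bool" where
  "cycle_strongly_traverses G S r X cs \<longleftrightarrow>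
     (\<exists>i k. k \<le> length cs \<and> (strong_trav G S r X (cyc_window cs i k) \<or> strong_trav G S r X (cyc_window (rev cs) i k)))"

definition word_eval :: "('a,'b) monoid_scheme \<Rightarrow> 'a list \<Rightarrow> 'a" where
  "word_eval G w = foldr (\<lambda>a b. a \<otimes>\<^bsub>G\<^esub> b) w \<one>\<^bsub>G\<^esub>"

definition word_walk :: "('a,'b) monoid_scheme \<Rightarrow> 'a \<Rightarrow> 'a list \<Rightarrow> 'a list" where
  "word_walk G v w = map (\<lambda>k. v \<otimes>\<^bsub>G\<^esub> word_eval G (take k w)) [0..<Suc (length w)]"

definition word_strongly_traverses :: "('a,'b) monoid_scheme \<Rightarrow> 'a set \<Rightarrow> nat \<Rightarrow> 'a set \<Rightarrow> 'a list \<Rightarrow> bool" where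
  "word_strongly_traverses G S r X w \<longleftrightarrow>
     (\<exists>v\<in>carrier G. \<exists>p ws q. word_walk G v w = p @ ws @ q \<and> strong_trav G S r X ws)"

definition morpheme :: "('a,'b) monoid_scheme \<Rightarrow> 'a set \<Rightarrow> 'a list \<Rightarrow> bool" where
  "morpheme G S m \<longleftrightarrow> m \<noteq> [] \<and> set m \<subseteq> S \<and> word_eval G m = \<one>\<^bsub>G\<^esub> \<and>
     (\<forall>p u q. m = p @ u @ q \<and> u \<noteq> [] \<and> (p \<noteq> [] \<or> q \<noteq> []) \<longrightarrow> word_eval G u \<noteq> \<one>\<^bsub>G\<^esub>)"

definition word_inv :: "('a,'b) monoid_scheme \<Rightarrow> 'a list \<Rightarrow> 'a list" where
  "word_inv G w = rev (map (\<lambda>a. inv\<^bsub>G\<^esub> a) w)"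

definition cyclic_subword :: "('a,'b) monoid_scheme \<Rightarrow> 'a list \<Rightarrow> 'a list \<Rightarrow> bool" where
  "cyclic_subword G u w \<longleftrightarrow> (\<exists>k p q. rotate k w = p @ u @ q \<or> rotate k w = p @ word_inv G u @ q)"

end

(* Suppose a strong traversal a, x, y, b of X = {x, y} lies on a closed walk W of length at most r
   that visits no vertex twice. The rest of W joins b back to a without meeting X, and since W is a
   closed walk of length at most r through x, all of its edges lie in the ball B_r(x). So a and b lie
   in one component of B_r(x) - X and are adjacent in C_r(x, y), whereas a strong traversal needs
   them in distinct r-local components.
   A cycle of length at most r is such a walk. So is the walk traced by a morpheme of length at most
   r: by minimality no proper nonempty subword evaluates to the identity, so the walk repeats no
   vertex except its endpoints. This walk contains a translate of the walk of every subword, and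
   rotations and inverses of morphemes are morphemes, which takes care of cyclic subwords. *)

theory Submission
  imports Defs
begin

lemma is_walk_Cons:
  assumes "ys \<noteq> []"
  shows "is_walk G S (x # ys) \<longleftrightarrow> cay_adj G S x (hd ys) \<and> is_walk G S ys"
proof -
  have "(\<forall>i. Suc i < length (x # ys) \<longrightarrow> cay_adj G S ((x # ys) ! i) ((x # ys) ! Suc i)) \<longleftrightarrow>
    cay_adj G S x (hd ys) \<and> (\<forall>i. Suc i < length ys \<longrightarrow> cay_adj G S (ys ! i) (ys ! Suc i))"
    (is "(\<forall>i. ?P i) \<longleftrightarrow> _")
  proof -
    have "(\<forall>i. ?P i) \<longleftrightarrow> ?P 0 \<and> (\<forall>i. ?P (Suc i))"
      by (metis not0_implies_Suc)
    then show ?thesis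
      using assms by (simp add: hd_conv_nth)
  qed
  then show ?thesis
    using assms by (auto simp: is_walk_def cay_adj_def)
qed

lemma ball_path_along_segment:
  assumes "closed_walk_through G S r x W" "W = p @ u @ q" "u \<noteq> []" "set u \<inter> X = {}"
  shows "(hd u, last u) \<in> {(a, b). ball_edge G S r x a b \<and> a \<notin> X \<and> b \<notin> X}\<^sup>*"
  using assms(3,2,4)
proof (induction u arbitrary: p rule: list_nonempty_induct)
  case (cons a u)
  have "W = (p @ [a]) @ u @ q"
    using cons.prems by simp
  then have "(hd u, last u) \<in> {(a, b). ball_edge G S r x a b \<and> a \<notin> X \<and> b \<notin> X}\<^sup>*"
    using cons by simp
  moreover have "ball_edge G S r x a (hd u)"
    unfolding ball_edge_def
    using assms(1) cons.prems(1) \<open>u \<noteq> []\<close>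
    by (intro exI[of _ W] exI[of _ "length p"]) (auto simp: nth_append hd_conv_nth)
  moreover have "a \<notin> X" "hd u \<notin> X"
    using cons.prems(2) hd_in_set[OF \<open>u \<noteq> []\<close>] by auto
  ultimately show ?case
    by (auto intro: converse_rtrancl_into_rtrancl)
qed simp

lemma sym_ball_edge_avoiding: "sym {(a, b). ball_edge G S r x a b \<and> a \<notin> X \<and> b \<notin> X}"
  unfolding sym_def ball_edge_def by (auto simp: insert_commute)

lemma closed_walk_split_avoids:
  assumes "hd W = last W" "distinct (tl W)" "W = P @ [x, y] @ Q" "P \<noteq> []" "Q \<noteq> []"
  shows "x \<noteq> y" "set P \<inter> {x, y} = {}" "set Q \<inter> {x, y} = {}"
proof -
  have "distinct (tl P @ [x, y] @ Q)" "hd P = last Q"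
    using assms by auto
  moreover have "set P = insert (hd P) (set (tl P))"
    using assms(4) by (cases P) auto
  ultimately show "x \<noteq> y" "set P \<inter> {x, y} = {}" "set Q \<inter> {x, y} = {}"
    using assms(5) by auto
qed

lemma closed_walk_not_strong_trav:
  assumes "card X = 2" "is_walk G S W" "hd W = last W" "distinct (tl W)" "length W \<le> Suc r"
    "W = p @ ws @ q"
  shows "\<not> strong_trav G S r X ws"
proof
  assume trav: "strong_trav G S r X ws"
  then obtain a x y b where ws: "ws = [a, x, y, b]"
    unfolding strong_trav_def by (auto simp: numeral_eq_Suc length_Suc_conv)
  with trav have ab: "a \<in> nbhd G S X" "b \<in> nbhd G S X" "\<not> same_local_comp G S r X a b"
    and "x \<in> X" "y \<in> X"
    by (auto simp: strong_trav_def)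
  have W: "W = (p @ [a]) @ [x, y] @ (b # q)"
    using assms(6) ws by simp
  note avoid = closed_walk_split_avoids[OF assms(3,4) W]
  have X: "X = {x, y}"
    using assms(1) avoid(1) \<open>x \<in> X\<close> \<open>y \<in> X\<close>
    by (auto simp: card_2_iff)
  define R where "R = {(a, b). ball_edge G S r x a b \<and> a \<notin> X \<and> b \<notin> X}"
  have closed: "closed_walk_through G S r x W"
    using assms(2,3,5) W by (auto simp: closed_walk_through_def)
  have avoid_X: "set (p @ [a]) \<inter> X = {}" "set (b # q) \<inter> X = {}"
    using avoid X by simp_all
  have "(b, last (b # q)) \<in> R\<^sup>*"
    using ball_path_along_segment[OF closed _ _ avoid_X(2), where p = "p @ [a, x, y]" and q = "[]"] W
    unfolding R_def by simp
  moreover have "(hd (p @ [a]), a) \<in> R\<^sup>*"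
    using ball_path_along_segment[OF closed _ _ avoid_X(1), where p = "[]" and q = "[x, y] @ b # q"] W
    unfolding R_def by simp
  moreover have "last (b # q) = hd (p @ [a])"
    using assms(3) W by (cases p) auto
  ultimately have "(b, a) \<in> R\<^sup>*"
    by simp
  moreover have "sym (R\<^sup>*)"
    unfolding R_def by (rule sym_rtrancl[OF sym_ball_edge_avoiding])
  ultimately have "(a, b) \<in> R\<^sup>*"
    by (blast dest: symD)
  moreover have "a \<in> ball_verts G S r x" "b \<in> ball_verts G S r x"
    using closed unfolding ball_verts_def by (auto simp: W)
  moreover have "a \<notin> X" "b \<notin> X"
    using ab by (simp_all add: nbhd_def)
  ultimately have "ball_conn G S r x X a b"
    unfolding ball_conn_def R_def by blast
  then have "conn_adj G S r X a b"
    using ab \<open>x \<in> X\<close> by (auto simp: conn_adj_def)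
  then have "same_local_comp G S r X a b"
    using ab by (auto simp: same_local_comp_def intro: r_into_rtrancl)
  with ab show False
    by simp
qed

lemma cyc_window_nth: "j \<le> k \<Longrightarrow> cyc_window cs i k ! j = cs ! ((i + j) mod length cs)"
  by (simp add: cyc_window_def nth_map_upt del: upt_Suc)

lemma cyc_window_prefix: "k \<le> l \<Longrightarrow> cyc_window cs i k = take (Suc k) (cyc_window cs i l)"
  by (simp add: cyc_window_def take_map min_absorb1 del: upt_Suc)

lemma tl_cyc_window_full: "tl (cyc_window cs i (length cs)) = rotate (Suc i) cs"
proof (rule nth_equalityI)
  fix j
  assume "j < length (tl (cyc_window cs i (length cs)))"
  then have "j < length cs"
    by (simp add: cyc_window_def)
  then have "rotate (Suc i) cs ! j = cs ! ((i + Suc j) mod length cs)"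
    by (simp only: nth_rotate add.commute add_Suc_right add_Suc)
  with \<open>j < length cs\<close> show "tl (cyc_window cs i (length cs)) ! j = rotate (Suc i) cs ! j"
    by (simp add: nth_tl cyc_window_nth cyc_window_def del: upt_Suc)
qed (simp add: cyc_window_def)

lemma is_walk_cyc_window:
  assumes "is_cycle G S cs"
  shows "is_walk G S (cyc_window cs i k)"
proof -
  have "cs \<noteq> []" "set cs \<subseteq> carrier G"
    using assms by (auto simp: is_cycle_def)
  moreover have "cay_adj G S (cs ! ((i + j) mod length cs)) (cs ! ((i + Suc j) mod length cs))" for j
  proof -
    have "(i + j) mod length cs < length cs"
      using \<open>cs \<noteq> []\<close> by simp
    then have "cay_adj G S (cs ! ((i + j) mod length cs)) (cs ! (Suc ((i + j) mod length cs) mod length cs))"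
      using assms unfolding is_cycle_def by blast
    then show ?thesis
      by (simp add: mod_Suc_eq)
  qed
  ultimately show ?thesis
    by (auto simp: is_walk_def cyc_window_nth cyc_window_def simp del: upt_Suc)
qed

lemma cyc_window_not_strong_trav:
  assumes "card X = 2" "is_cycle G S cs" "length cs \<le> r"
  shows "\<not> strong_trav G S r X (cyc_window cs i k)"
proof
  assume trav: "strong_trav G S r X (cyc_window cs i k)"
  define W where "W = cyc_window cs i (length cs)"
  have "k = 3" "length cs \<ge> 3"
    using trav assms(2) by (auto simp: strong_trav_def cyc_window_def is_cycle_def)
  then have "W = [] @ cyc_window cs i k @ drop 4 W"
    unfolding W_def using cyc_window_prefix[of 3 "length cs" cs i] by simp
  moreover have "hd W = last W"
    using \<open>length cs \<ge> 3\<close>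
    by (simp add: W_def hd_conv_nth last_conv_nth cyc_window_nth cyc_window_def del: upt_Suc)
  moreover have "distinct (tl W)"
    using assms(2) by (simp add: W_def tl_cyc_window_full is_cycle_def)
  moreover have "length W \<le> Suc r"
    using assms(3) by (simp add: W_def cyc_window_def)
  ultimately show False
    using closed_walk_not_strong_trav[OF assms(1) is_walk_cyc_window[OF assms(2)]] trav W_def by blast
qed

lemma word_inv_append: "word_inv G (u @ w) = word_inv G w @ word_inv G u"
  by (simp add: word_inv_def)

context group
begin

lemma word_eval_Nil [simp]: "word_eval G [] = \<one>"
  by (simp add: word_eval_def)

lemma word_eval_Cons [simp]: "word_eval G (a # w) = a \<otimes> word_eval G w"
  by (simp add: word_eval_def)

lemma word_eval_closed [intro, simp]: "set w \<subseteq> carrier G \<Longrightarrow> word_eval G w \<in> carrier G"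
  by (induction w) auto

lemma word_eval_append:
  assumes "set u \<subseteq> carrier G" "set w \<subseteq> carrier G"
  shows "word_eval G (u @ w) = word_eval G u \<otimes> word_eval G w"
  using assms by (induction u) (auto simp: m_assoc)

lemma word_eval_append_swap_one:
  assumes "set u \<subseteq> carrier G" "set w \<subseteq> carrier G" "word_eval G (u @ w) = \<one>"
  shows "word_eval G (w @ u) = \<one>"
  using assms inv_comm by (simp add: word_eval_append)

lemma word_eval_word_inv:
  "set w \<subseteq> carrier G \<Longrightarrow> word_eval G (word_inv G w) = inv (word_eval G w)"
proof (induction w)
  case (Cons a w)
  have "set (word_inv G w) \<subseteq> carrier G"
    using Cons.prems by (auto simp: word_inv_def)
  moreover have "word_inv G (a # w) = word_inv G w @ [inv a]"
    by (simp add: word_inv_def)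
  ultimately have "word_eval G (word_inv G (a # w)) = inv (word_eval G w) \<otimes> inv a"
    using Cons by (simp add: word_eval_append)
  with Cons.prems show ?case by (simp add: inv_mult_group)
qed (simp add: word_inv_def)

lemma word_inv_word_inv [simp]: "set w \<subseteq> carrier G \<Longrightarrow> word_inv G (word_inv G w) = w"
  by (induction w) (auto simp: word_inv_def)

lemma morpheme_carrier: "S \<subseteq> carrier G \<Longrightarrow> morpheme G S m \<Longrightarrow> set m \<subseteq> carrier G"
  by (auto simp: morpheme_def)

lemma morpheme_rotate1:
  assumes "S \<subseteq> carrier G" "morpheme G S m"
  shows "morpheme G S (rotate1 m)"
proof -
  obtain a rest where m: "m = a # rest"
    using assms(2) by (cases m) (auto simp: morpheme_def)
  have carr: "a \<in> carrier G" "set rest \<subseteq> carrier G"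
    using morpheme_carrier[OF assms] m by auto
  have proper: "word_eval G u \<noteq> \<one>" if "m = p @ u @ q" "u \<noteq> []" "p \<noteq> [] \<or> q \<noteq> []" for p u q
    using assms(2) that unfolding morpheme_def by blast
  have one: "word_eval G (rest @ [a]) = \<one>"
    using assms(2) carr m word_eval_append_swap_one[of "[a]" rest] by (simp add: morpheme_def)
  show ?thesis
    unfolding morpheme_def
  proof (intro conjI allI impI)
    show "rotate1 m \<noteq> []" "set (rotate1 m) \<subseteq> S"
      using assms(2) m by (auto simp: morpheme_def)
    show "word_eval G (rotate1 m) = \<one>"
      using one m by simp
  next
    fix p u q
    assume split: "rotate1 m = p @ u @ q \<and> u \<noteq> [] \<and> (p \<noteq> [] \<or> q \<noteq> [])"
    show "word_eval G u \<noteq> \<one>"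
    proof (cases q rule: rev_cases)
      case (snoc q' b)
      then have "m = (a # p) @ u @ q'"
        using split m by simp
      then show ?thesis
        using proper split by blast
    next
      case Nil
      \<comment> \<open>If the suffix u were trivial, so would be the proper subword p of m = a # rest.\<close>
      then have pu: "rest @ [a] = p @ u" "p \<noteq> []"
        using split m by auto
      have "rest = butlast (p @ u)"
        using pu(1) by (metis butlast_snoc)
      then have rest: "rest = p @ butlast u"
        using split by (simp add: butlast_append)
      have carr_pu: "set p \<subseteq> carrier G" "set u \<subseteq> carrier G"
        using arg_cong[OF pu(1), of set] carr by auto
      show ?thesis
      proof
        assume "word_eval G u = \<one>"
        with one pu(1) carr_pu have "word_eval G p = \<one>"
          by (simp add: word_eval_append)
        moreover have "m = [a] @ p @ butlast u"
          using m rest by simp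
        ultimately show False
          using proper pu(2) by blast
      qed
    qed
  qed
qed

lemma morpheme_rotate: "S \<subseteq> carrier G \<Longrightarrow> morpheme G S m \<Longrightarrow> morpheme G S (rotate k m)"
  by (induction k) (simp_all add: rotate_Suc morpheme_rotate1)

lemma morpheme_word_inv:
  assumes "S \<subseteq> carrier G" "\<forall>s\<in>S. inv s \<in> S" "morpheme G S m"
  shows "morpheme G S (word_inv G m)"
proof -
  have carr: "set m \<subseteq> carrier G"
    using morpheme_carrier[OF assms(1,3)] .
  show ?thesis
    unfolding morpheme_def
  proof (intro conjI allI impI)
    show "word_inv G m \<noteq> []" "set (word_inv G m) \<subseteq> S"
      using assms(2,3) by (auto simp: morpheme_def word_inv_def)
    show "word_eval G (word_inv G m) = \<one>"
      using assms(3) carr by (simp add: word_eval_word_inv morpheme_def)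
  next
    fix p u q
    assume split: "word_inv G m = p @ u @ q \<and> u \<noteq> [] \<and> (p \<noteq> [] \<or> q \<noteq> [])"
    then have "m = word_inv G q @ word_inv G u @ word_inv G p"
      using carr by (metis word_inv_word_inv word_inv_append append_assoc)
    moreover have "word_inv G u \<noteq> []" "word_inv G q \<noteq> [] \<or> word_inv G p \<noteq> []"
      using split by (auto simp: word_inv_def)
    ultimately have "word_eval G (word_inv G u) \<noteq> \<one>"
      using assms(3) unfolding morpheme_def by blast
    moreover have "set (word_inv G m) \<subseteq> carrier G"
      using carr by (auto simp: word_inv_def)
    then have "set u \<subseteq> carrier G"
      using split by auto
    ultimately show "word_eval G u \<noteq> \<one>"
      by (auto simp: word_eval_word_inv)
  qed
qed

lemma morpheme_prefix_evals_distinct: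
  assumes "S \<subseteq> carrier G" "morpheme G S m" "0 < i" "i < j" "j \<le> length m"
  shows "word_eval G (take i m) \<noteq> word_eval G (take j m)"
proof
  define u where "u = drop i (take j m)"
  have prefix: "take j m = take i m @ u"
    using assms(4) unfolding u_def by (metis append_take_drop_id less_imp_le_nat min.absorb1 take_take)
  then have m: "m = take i m @ u @ drop j m"
    by (metis append_assoc append_take_drop_id)
  have carr: "set (take i m) \<subseteq> carrier G" "set u \<subseteq> carrier G"
    using morpheme_carrier[OF assms(1,2)] m by (metis Un_subset_iff set_append)+
  assume "word_eval G (take i m) = word_eval G (take j m)"
  with prefix carr have "word_eval G u = \<one>"
    by (simp add: word_eval_append)
  moreover have "u \<noteq> []" "take i m \<noteq> []"
    using assms(3-5) by (auto simp: u_def)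
  ultimately show False
    using assms(2) m unfolding morpheme_def by blast
qed

lemma word_walk_Cons:
  assumes "g \<in> carrier G" "a \<in> carrier G" "set w \<subseteq> carrier G"
  shows "word_walk G g (a # w) = g # word_walk G (g \<otimes> a) w"
proof -
  have "[0..<Suc (Suc (length w))] = 0 # map Suc [0..<Suc (length w)]"
    by (simp add: upt_conv_Cons map_Suc_upt del: upt_Suc)
  moreover have "word_eval G (take k w) \<in> carrier G" for k
    using assms(3) by (meson order_trans set_take_subset word_eval_closed)
  ultimately show ?thesis
    using assms by (simp add: word_walk_def m_assoc comp_def del: upt_Suc)
qed

lemma word_walk_not_Nil [simp]: "word_walk G g w \<noteq> []"
  by (simp add: word_walk_def del: upt_Suc)

lemma hd_word_walk [simp]: "g \<in> carrier G \<Longrightarrow> hd (word_walk G g w) = g"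
  by (simp add: word_walk_def hd_map del: upt_Suc)

lemma last_word_walk:
  "g \<in> carrier G \<Longrightarrow> set w \<subseteq> carrier G \<Longrightarrow> last (word_walk G g w) = g \<otimes> word_eval G w"
  by (simp add: word_walk_def)

lemma word_walk_append:
  assumes "g \<in> carrier G" "set u \<subseteq> carrier G" "set w \<subseteq> carrier G"
  shows "word_walk G g (u @ w) = butlast (word_walk G g u) @ word_walk G (g \<otimes> word_eval G u) w"
  using assms
proof (induction u arbitrary: g)
  case Nil
  then show ?case
    by (simp add: word_walk_def)
next
  case (Cons a u)
  then show ?case
    by (simp add: word_walk_Cons m_assoc)
qed

lemma word_walk_infix:
  assumes "g \<in> carrier G" "set p \<subseteq> carrier G" "set w \<subseteq> carrier G" "set q \<subseteq> carrier G"
  obtains pre post where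
    "word_walk G g (p @ w @ q) = pre @ word_walk G (g \<otimes> word_eval G p) w @ post"
proof -
  define v where "v = g \<otimes> word_eval G p"
  define h where "h = v \<otimes> word_eval G w"
  have "v \<in> carrier G" "h \<in> carrier G" "last (word_walk G v w) = h"
    using assms by (simp_all add: v_def h_def last_word_walk)
  then have "word_walk G v (w @ q) = butlast (word_walk G v w) @ last (word_walk G v w) # tl (word_walk G h q)"
    using word_walk_append[of v w q] assms(3,4) by (metis h_def hd_word_walk list.collapse word_walk_not_Nil)
  then have "word_walk G v (w @ q) = word_walk G v w @ tl (word_walk G h q)"
    by (metis append_butlast_last_id append_Cons append_assoc append_Nil word_walk_not_Nil)
  moreover have "word_walk G g (p @ w @ q) = butlast (word_walk G g p) @ word_walk G v (w @ q)"
    using word_walk_append[of g p "w @ q"] assms by (simp add: v_def)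
  ultimately show ?thesis
    using that v_def by simp
qed

lemma is_walk_word_walk:
  assumes "S \<subseteq> carrier G" "g \<in> carrier G" "set w \<subseteq> S"
  shows "is_walk G S (word_walk G g w)"
  using assms(2,3)
proof (induction w arbitrary: g)
  case Nil
  then show ?case
    by (simp add: is_walk_def word_walk_def)
next
  case (Cons a w)
  then have "a \<in> S" "a \<in> carrier G" "g \<otimes> a \<in> carrier G" "set w \<subseteq> carrier G"
    using assms(1) by auto
  with Cons show ?case
    by (auto simp: word_walk_Cons is_walk_Cons cay_adj_def)
qed

lemma distinct_tl_word_walk_morpheme:
  assumes "S \<subseteq> carrier G" "morpheme G S m" "g \<in> carrier G"
  shows "distinct (tl (word_walk G g m))"
proof -
  have carr: "set (take k m) \<subseteq> carrier G" for k
    using morpheme_carrier[OF assms(1,2)] by (meson order_trans set_take_subset)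
  have "inj_on (\<lambda>k. g \<otimes> word_eval G (take k m)) {1..length m}"
  proof (rule inj_onI)
    fix i j
    assume "i \<in> {1..length m}" "j \<in> {1..length m}"
      and "g \<otimes> word_eval G (take i m) = g \<otimes> word_eval G (take j m)"
    then have "i \<ge> 1" "j \<ge> 1" "i \<le> length m" "j \<le> length m"
      and "word_eval G (take i m) = word_eval G (take j m)"
      using carr assms(3) by auto
    then show "i = j"
      using morpheme_prefix_evals_distinct[OF assms(1,2)]
      by (metis linorder_neqE_nat less_le_trans zero_less_one)
  qed
  then show ?thesis
    by (simp add: word_walk_def distinct_map map_tl[symmetric] atLeastLessThanSuc_atLeastAtMost del: upt_Suc)
qed

lemma cay_adj_sym:
  assumes "S \<subseteq> carrier G" "\<forall>s\<in>S. inv s \<in> S" "cay_adj G S g h"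
  shows "cay_adj G S h g"
proof -
  obtain s where s: "s \<in> S" "h = g \<otimes> s" "g \<in> carrier G" "h \<in> carrier G"
    using assms(3) by (auto simp: cay_adj_def)
  then have "g = h \<otimes> inv s"
    using assms(1) by (auto simp: m_assoc)
  with s assms(2) show ?thesis
    by (auto simp: cay_adj_def)
qed

lemma is_cycle_rev:
  assumes "S \<subseteq> carrier G" "\<forall>s\<in>S. inv s \<in> S" "is_cycle G S cs"
  shows "is_cycle G S (rev cs)"
proof -
  define n where "n = length cs"
  have adj: "cay_adj G S (cs ! j) (cs ! (Suc j mod n))" if "j < n" for j
    using assms(3) that by (simp add: is_cycle_def n_def)
  have "cay_adj G S (rev cs ! i) (rev cs ! (Suc i mod n))" if "i < n" for i
  proof (cases "Suc i < n")
    case True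
    with adj[of "n - Suc (Suc i)"] have "cay_adj G S (cs ! (n - Suc (Suc i))) (cs ! (n - Suc i))"
      by (simp add: Suc_diff_Suc)
    with True show ?thesis
      using cay_adj_sym[OF assms(1,2)] by (simp add: rev_nth n_def)
  next
    case False
    with that have "i = n - 1" "n \<noteq> 0"
      by auto
    with adj[of "n - 1"] show ?thesis
      using cay_adj_sym[OF assms(1,2)] by (simp add: rev_nth n_def)
  qed
  with assms(3) show ?thesis
    by (simp add: is_cycle_def n_def)
qed

lemma morpheme_subword_not_strongly_traversed:
  assumes "S \<subseteq> carrier G" "card X = 2" "morpheme G S m" "length m \<le> r" "m = p @ w @ q"
  shows "\<not> word_strongly_traverses G S r X w"
proof
  assume "word_strongly_traverses G S r X w"
  then obtain v p' ws q' where v: "v \<in> carrier G" "word_walk G v w = p' @ ws @ q'"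
    and trav: "strong_trav G S r X ws"
    by (auto simp: word_strongly_traverses_def)
  have carr: "set p \<subseteq> carrier G" "set w \<subseteq> carrier G" "set q \<subseteq> carrier G"
    using morpheme_carrier[OF assms(1,3)] assms(5) by auto
  define g where "g = v \<otimes> inv (word_eval G p)"
  have g: "g \<in> carrier G" "g \<otimes> word_eval G p = v"
    using carr v(1) by (auto simp: g_def m_assoc)
  define W where "W = word_walk G g m"
  obtain pre post where "W = pre @ word_walk G v w @ post"
    using word_walk_infix[OF g(1) carr] unfolding g(2) assms(5)[symmetric] W_def[symmetric] .
  then have "W = (pre @ p') @ ws @ (q' @ post)"
    using v(2) by simp
  moreover have "is_walk G S W"
    using is_walk_word_walk[OF assms(1) g(1)] assms(3) by (simp add: W_def morpheme_def)
  moreover have "hd W = last W"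
    using assms(3) g(1) morpheme_carrier[OF assms(1,3)]
    by (simp add: W_def last_word_walk morpheme_def)
  moreover have "distinct (tl W)"
    using distinct_tl_word_walk_morpheme[OF assms(1,3) g(1)] by (simp add: W_def)
  moreover have "length W \<le> Suc r"
    using assms(4) by (simp add: W_def word_walk_def)
  ultimately show False
    using closed_walk_not_strong_trav[OF assms(2)] trav by blast
qed

lemma cyclic_subword_of_morpheme:
  assumes "S \<subseteq> carrier G" "\<forall>s\<in>S. inv s \<in> S" "morpheme G S m" "cyclic_subword G w m"
    "set w \<subseteq> carrier G"
  obtains m' p q where "morpheme G S m'" "length m' = length m" "m' = p @ w @ q"
proof -
  obtain k p q where "rotate k m = p @ w @ q \<or> rotate k m = p @ word_inv G w @ q"
    using assms(4) by (auto simp: cyclic_subword_def)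
  moreover have "morpheme G S (rotate k m)"
    using morpheme_rotate[OF assms(1,3)] .
  moreover have "word_inv G (p @ word_inv G w @ q) = word_inv G q @ w @ word_inv G p"
    using assms(5) by (simp add: word_inv_append)
  ultimately show ?thesis
    using that morpheme_word_inv[OF assms(1,2)] by (metis length_rotate length_rev length_map word_inv_def)
qed

end

lemma local_2sep_card: "local_2sep G S r X \<Longrightarrow> card X = 2"
  by (auto simp: local_2sep_def)

theorem lemma5p10:
  fixes G :: "('a, 'b) monoid_scheme" and S :: "'a set" and r :: nat and X :: "'a set"
  assumes "group G"
    and "S \<subseteq> carrier G" and "\<one>\<^bsub>G\<^esub> \<notin> S" and "\<forall>s\<in>S. inv\<^bsub>G\<^esub> s \<in> S"
    and "generate G S = carrier G"
    and "r \<ge> 2"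
    and "local_2sep G S r X"
  shows "(\<forall>cs. is_cycle G S cs \<and> length cs \<le> r \<longrightarrow> \<not> cycle_strongly_traverses G S r X cs) \<and>
         (\<forall>w. set w \<subseteq> S \<and> word_strongly_traverses G S r X w \<longrightarrow>
              (\<forall>m. morpheme G S m \<and> length m \<le> r \<longrightarrow> \<not> cyclic_subword G w m))"
proof -
  interpret group G by fact
  have X: "card X = 2"
    using local_2sep_card[OF assms(7)] .
  have cycles: "\<not> cycle_strongly_traverses G S r X cs" if "is_cycle G S cs" "length cs \<le> r" for cs
    using cyc_window_not_strong_trav[OF X that]
      cyc_window_not_strong_trav[OF X is_cycle_rev[OF assms(2,4) that(1)]] that(2)
    by (auto simp: cycle_strongly_traverses_def)
  have words: "\<not> cyclic_subword G w m"
    if "set w \<subseteq> S" "word_strongly_traverses G S r X w" "morpheme G S m" "length m \<le> r" for w m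
  proof
    assume "cyclic_subword G w m"
    with that(1,3) assms(2) obtain m' p q where "morpheme G S m'" "length m' = length m" "m' = p @ w @ q"
      using cyclic_subword_of_morpheme[OF assms(2,4)] by blast
    with that(2,4) show False
      using morpheme_subword_not_strongly_traversed[OF assms(2) X] by simp
  qed
  show ?thesis
    using cycles words by blast
qed

end
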